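(* For all integers $n\ge1$, $k\ge1$ and $0\le p\le n$, $$\sum_{j=0}^p(-1)^j\binom{n-j}{p-j}\binom{n+k-j}{k}\binom{n+1}{j}=\binom{n+k-p}{k}\binom{k-1}{p}=\sum_{s=p}^n\binom{s}{p}\binom{k-1}{s}\binom{n+1}{n-s}.$$ *)

theory Defs
  imports Main
begin
end

theory Submission
  imports Defs
begin

(*
  Both identities come down to Vandermonde's convolution. In the right-hand sum,
  C(s,p) C(k-1,s) = C(k-1,p) C(k-1-p,s-p) pulls out the factor C(k-1,p) and leaves a
  convolution equal to C(n+k-p,n-p) = C(n+k-p,k). In the alternating sum, Vandermonde gives
  C(n+k-j,k) = sum_s C(k-1,s) C(n+1-j,s+1), and trinomial revision turns
  C(n+1,j) C(n+1-j,s+1) into C(n+1,s+1) C(n-s,j). After exchanging the sums, the inner sum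
  sum_j (-1)^j C(n-s,j) C(n-j,p-j) is the inclusion-exclusion count C(s,p) of the p-subsets
  of an n-set avoiding a fixed (n-s)-subset, which yields the right-hand sum.
*)

lemma choose_mult':
  assumes "k \<le> m"
  shows "(n choose m) * (m choose k) = (n choose k) * ((n - k) choose (m - k))"
proof (cases "m \<le> n")
  case True
  then show ?thesis using choose_mult assms by blast
next
  case False
  then show ?thesis using assms by (cases "k \<le> n") (auto simp: binomial_eq_0)
qed

lemma choose_mult_choose_diff_commute:
  "(a choose j) * ((a - j) choose t) = (a choose t) * ((a - t) choose j)"
  using choose_mult'[of j "j + t" a] choose_mult'[of t "j + t" a] binomial_symmetric[of j "j + t"]
  by simp

lemma sum_alternating_choose_mult_choose:
  assumes "m \<le> n"
  shows "(\<Sum>j=0..p. (-1::int) ^ j * int (m choose j) * int ((n - j) choose (p - j)))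
       = int ((n - m) choose p)"
  using assms
proof (induction m arbitrary: n p)
  case 0
  then show ?case by (simp add: sum.atLeast_Suc_atMost sum.neutral)
next
  case (Suc m)
  show ?case
  proof (cases p)
    case 0
    then show ?thesis by simp
  next
    case (Suc q)
    let ?S = "\<lambda>m n p. \<Sum>j=0..p. (-1::int) ^ j * int (m choose j) * int ((n - j) choose (p - j))"
    have "?S (Suc m) n (Suc q) = ?S m n (Suc q)
        + (\<Sum>j=0..q. (-1::int) ^ Suc j * int (m choose j) * int ((n - Suc j) choose (q - j)))"
      unfolding sum.atLeast0_atMost_Suc_shift
      by (simp add: ring_distribs flip: sum.distrib) (rule sum.cong; simp)
    also have "(\<Sum>j=0..q. (-1::int) ^ Suc j * int (m choose j) * int ((n - Suc j) choose (q - j)))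
        = - ?S m (n - 1) q"
      by (simp add: sum_negf[symmetric])
    also have "?S m n (Suc q) + - ?S m (n - 1) q
        = int ((n - m) choose Suc q) - int ((n - 1 - m) choose q)"
      using Suc.IH[of n "Suc q"] Suc.IH[of "n - 1" q] \<open>Suc m \<le> n\<close> by simp
    also have "\<dots> = int ((n - Suc m) choose Suc q)"
      using \<open>Suc m \<le> n\<close> by (simp flip: Suc_diff_Suc)
    finally show ?thesis using Suc by simp
  qed
qed

lemma choose_add_Suc_eq_sum_choose_mult_choose_Suc:
  assumes "N \<le> n"
  shows "(N + Suc K) choose Suc K = (\<Sum>s\<le>n. (K choose s) * ((N + 1) choose Suc s))"
proof -
  have "(N + Suc K) choose Suc K = (N + Suc K) choose N"
    using binomial_symmetric[of N "N + Suc K"] by simp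
  also have "\<dots> = (K + (N + 1)) choose N"
    by (simp add: add.commute)
  also have "\<dots> = (\<Sum>s\<le>N. (K choose s) * ((N + 1) choose (N - s)))"
    by (rule vandermonde[symmetric])
  also have "\<dots> = (\<Sum>s\<le>N. (K choose s) * ((N + 1) choose Suc s))"
    using binomial_symmetric[of "Suc s" "N + 1" for s] by (intro sum.cong) auto
  also have "\<dots> = (\<Sum>s\<le>n. (K choose s) * ((N + 1) choose Suc s))"
    using assms by (intro sum.mono_neutral_left) auto
  finally show ?thesis .
qed

lemma sum_choose_mult_choose_mult_choose:
  assumes "p \<le> n"
  shows "(\<Sum>s=p..n. (s choose p) * (K choose s) * (M choose (n - s)))
       = (K choose p) * ((K - p + M) choose (n - p))"
proof -
  have "(s choose p) * (K choose s) = (K choose p) * ((K - p) choose (s - p))" if "p \<le> s" for s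
    using choose_mult'[OF that, of K] by (simp add: mult.commute)
  then have "(\<Sum>s=p..n. (s choose p) * (K choose s) * (M choose (n - s)))
      = (K choose p) * (\<Sum>s=p..n. ((K - p) choose (s - p)) * (M choose (n - s)))"
    unfolding sum_distrib_left by (intro sum.cong refl) (simp add: mult.assoc)
  also have "(\<Sum>s=p..n. ((K - p) choose (s - p)) * (M choose (n - s)))
      = (\<Sum>t\<le>n - p. ((K - p) choose t) * (M choose (n - p - t)))"
    using assms by (simp add: sum.atLeastAtMost_shift_0 atLeast0AtMost)
  also have "\<dots> = (K - p + M) choose (n - p)"
    by (rule vandermonde)
  finally show ?thesis .
qed

lemma sum_alternating_choose_diff_mult_choose_add:
  assumes "1 \<le> k"
  shows "(\<Sum>j=0..p. (-1::int) ^ j * int ((n - j) choose (p - j)) * int ((n + k - j) choose k)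
            * int ((n + 1) choose j))
       = (\<Sum>s=p..n. int (s choose p) * int ((k - 1) choose s) * int ((n + 1) choose (n - s)))"
proof -
  have expand: "((n + k - j) choose k) * ((n + 1) choose j)
      = (\<Sum>s\<le>n. ((k - 1) choose s) * ((n + 1) choose Suc s) * ((n - s) choose j))"
    for j
  proof (cases "j \<le> n")
    case True
    have "n - j + Suc (k - 1) = n + k - j" "n - j + 1 = n + 1 - j"
      using True assms by auto
    then have "(n + k - j) choose k = (\<Sum>s\<le>n. ((k - 1) choose s) * ((n + 1 - j) choose Suc s))"
      using choose_add_Suc_eq_sum_choose_mult_choose_Suc[of "n - j" n "k - 1"] True assms
      by (simp del: binomial_Suc_Suc)
    moreover have "((n + 1 - j) choose Suc s) * ((n + 1) choose j)
        = ((n + 1) choose Suc s) * ((n - s) choose j)" for s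
      using choose_mult_choose_diff_commute[of "n + 1" j "Suc s"] by (simp add: mult.commute)
    ultimately show ?thesis
      by (simp add: sum_distrib_right mult.assoc)
  next
    case False
    then have "n + k - j < k" and "n - s < j" for s
      using assms by auto
    then show ?thesis
      by (simp add: binomial_eq_0)
  qed
  have "(\<Sum>j=0..p. (-1::int) ^ j * int ((n - j) choose (p - j)) * int ((n + k - j) choose k)
            * int ((n + 1) choose j))
      = (\<Sum>j=0..p. (-1::int) ^ j * int ((n - j) choose (p - j))
            * int (((n + k - j) choose k) * ((n + 1) choose j)))"
    by (simp only: mult.assoc of_nat_mult)
  also have "\<dots> = (\<Sum>j=0..p. \<Sum>s\<le>n. (-1::int) ^ j * int ((n - j) choose (p - j))
            * (int ((k - 1) choose s) * int ((n + 1) choose Suc s) * int ((n - s) choose j)))"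
    by (simp only: expand of_nat_sum of_nat_mult sum_distrib_left)
  also have "\<dots> = (\<Sum>s\<le>n. int ((k - 1) choose s) * int ((n + 1) choose Suc s)
        * (\<Sum>j=0..p. (-1::int) ^ j * int ((n - s) choose j) * int ((n - j) choose (p - j))))"
    by (subst sum.swap) (simp only: sum_distrib_left ac_simps)
  also have "\<dots> = (\<Sum>s\<le>n. int ((k - 1) choose s) * int ((n + 1) choose Suc s) * int (s choose p))"
    by (intro sum.cong refl) (simp add: sum_alternating_choose_mult_choose)
  also have "\<dots> = (\<Sum>s=p..n. int (s choose p) * int ((k - 1) choose s) * int ((n + 1) choose (n - s)))"
    using binomial_symmetric[of "Suc s" "n + 1" for s]
    by (intro sum.mono_neutral_cong_right) auto
  finally show ?thesis .
qed

lemma sum_choose_mult_choose_minus_one_mult_choose_Suc: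
  assumes "1 \<le> k" and "p \<le> n"
  shows "(\<Sum>s=p..n. (s choose p) * ((k - 1) choose s) * ((n + 1) choose (n - s)))
       = ((n + k - p) choose k) * ((k - 1) choose p)"
proof -
  have "((k - 1) choose p) * ((k - 1 - p + (n + 1)) choose (n - p))
      = ((n + k - p) choose k) * ((k - 1) choose p)"
  proof (cases "p < k")
    case True
    then have "k - 1 - p + (n + 1) = n + k - p"
      by simp
    moreover have "(n + k - p) choose (n - p) = (n + k - p) choose k"
      using binomial_symmetric[of "n - p" "n + k - p"] assms by simp
    ultimately show ?thesis
      by (simp only: mult.commute)
  next
    case False
    then have "k - 1 < p"
      using assms by linarith
    then show ?thesis
      by (simp add: binomial_eq_0)
  qed
  then show ?thesis
    using sum_choose_mult_choose_mult_choose[OF \<open>p \<le> n\<close>] by simp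
qed

theorem mainTheorem6:
  fixes n k p :: nat
  assumes "n \<ge> 1" and "k \<ge> 1" and "p \<le> n"
  shows "(\<Sum>j=0..p. (-1::int)^j * int ((n - j) choose (p - j)) * int ((n + k - j) choose k)
            * int ((n + 1) choose j)) = int ((n + k - p) choose k) * int ((k - 1) choose p)
       \<and> int ((n + k - p) choose k) * int ((k - 1) choose p)
           = (\<Sum>s=p..n. int (s choose p) * int ((k - 1) choose s) * int ((n + 1) choose (n - s)))"
proof -
  have "(\<Sum>s=p..n. int (s choose p) * int ((k - 1) choose s) * int ((n + 1) choose (n - s)))
      = int ((n + k - p) choose k) * int ((k - 1) choose p)"
    using arg_cong[where f = int, OF sum_choose_mult_choose_minus_one_mult_choose_Suc[OF assms(2,3)]]
    by (simp only: of_nat_sum of_nat_mult)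
  then show ?thesis
    using sum_alternating_choose_diff_mult_choose_add[OF assms(2)] by simp
qed

end
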